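(* Let $a,\omega_1,\omega_2,\mu\in\mathbb{R}$ with $a\neq0$, and on $T^*\mathbb{R}^2$ with coordinates $(p_x,p_y,x,y)$ let \[H_{\mathrm{KdV}_5}=\tfrac12(p_x^2+p_y^2)+\tfrac12(\omega_1x^2+\omega_2y^2)+axy^2+2ax^3+\tfrac{\mu}{2y^2},\] \[K_{\mathrm{KdV}_5}=4ay\,p_xp_y+(4\omega_2-\omega_1-4ax)\Bigl(p_y^2+\tfrac{\mu}{y^2}\Bigr)+a^2y^4+4a^2x^2y^2+4a\omega_2xy^2+\omega_2(4\omega_2-\omega_1)y^2.\] Consider new variables $(P_1,P_2,X,Y)$, on an open set where $XY<0$ and $X\neq Y$, related to the old ones by \[x=\tfrac{2X+2Y-\omega_1+4\omega_2}{4a},\quad y=\tfrac{\sqrt{-XY}}{a},\quad p_x=2a\,\tfrac{XP_1-YP_2}{X-Y},\quad p_y=2a\sqrt{-XY}\,\tfrac{P_1-P_2}{X-Y}.\] Then $p_x\,dx+p_y\,dy=P_1\,dX+P_2\,dY$ (so the change of variables is canonical), and, with \[\Phi(\xi,\pi)=\frac{4\xi^5+(-4\omega_1+24\omega_2)\xi^4+(\omega_1-4\omega_2)(\omega_1-12\omega_2)\xi^3+\bigl(32a^4\pi^2+2\omega_1^2\omega_2-16\omega_1\omega_2^2+32\omega_2^3\bigr)\xi^2+8\mu a^4}{16\xi a^2},\] one has \[H_{\mathrm{KdV}_5}=\frac{\Phi(X,P_1)-\Phi(Y,P_2)}{X-Y},\qquad K_{\mathrm{KdV}_5}=\frac{4X\,\Phi(Y,P_2)-4Y\,\Phi(X,P_1)}{X-Y}.\]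 Consequently, on the common level set $H_{\mathrm{KdV}_5}=E$, $K_{\mathrm{KdV}_5}=K$ the separated relations $\Phi(X,P_1)-EX-\frac K4=0$ and $\Phi(Y,P_2)-EY-\frac K4=0$ hold. *)

theory Defs
  imports "HOL-Analysis.Analysis"
begin

definition H_KdV5 :: "real \<Rightarrow> real \<Rightarrow> real \<Rightarrow> real \<Rightarrow> real \<Rightarrow> real \<Rightarrow> real \<Rightarrow> real \<Rightarrow> real" where
  "H_KdV5 a \<omega>\<^sub>1 \<omega>\<^sub>2 \<mu> px py x y =
     (px^2 + py^2) / 2 + (\<omega>\<^sub>1 * x^2 + \<omega>\<^sub>2 * y^2) / 2 + a * x * y^2 + 2 * a * x^3 + \<mu> / (2 * y^2)"

definition K_KdV5 :: "real \<Rightarrow> real \<Rightarrow> real \<Rightarrow> real \<Rightarrow> real \<Rightarrow> real \<Rightarrow> real \<Rightarrow> real \<Rightarrow> real" where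
  "K_KdV5 a \<omega>\<^sub>1 \<omega>\<^sub>2 \<mu> px py x y =
     4 * a * y * px * py + (4 * \<omega>\<^sub>2 - \<omega>\<^sub>1 - 4 * a * x) * (py^2 + \<mu> / y^2)
     + a^2 * y^4 + 4 * a^2 * x^2 * y^2 + 4 * a * \<omega>\<^sub>2 * x * y^2 + \<omega>\<^sub>2 * (4 * \<omega>\<^sub>2 - \<omega>\<^sub>1) * y^2"

definition Phi :: "real \<Rightarrow> real \<Rightarrow> real \<Rightarrow> real \<Rightarrow> real \<Rightarrow> real \<Rightarrow> real" where
  "Phi a \<omega>\<^sub>1 \<omega>\<^sub>2 \<mu> \<xi> \<pi> =
     (4 * \<xi>^5 + (-4 * \<omega>\<^sub>1 + 24 * \<omega>\<^sub>2) * \<xi>^4 + (\<omega>\<^sub>1 - 4 * \<omega>\<^sub>2) * (\<omega>\<^sub>1 - 12 * \<omega>\<^sub>2) * \<xi>^3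
      + (32 * a^4 * \<pi>^2 + 2 * \<omega>\<^sub>1^2 * \<omega>\<^sub>2 - 16 * \<omega>\<^sub>1 * \<omega>\<^sub>2^2 + 32 * \<omega>\<^sub>2^3) * \<xi>^2
      + 8 * \<mu> * a^4) / (16 * \<xi> * a^2)"

definition x_of :: "real \<Rightarrow> real \<Rightarrow> real \<Rightarrow> real \<Rightarrow> real \<Rightarrow> real" where
  "x_of a \<omega>\<^sub>1 \<omega>\<^sub>2 X Y = (2 * X + 2 * Y - \<omega>\<^sub>1 + 4 * \<omega>\<^sub>2) / (4 * a)"

definition y_of :: "real \<Rightarrow> real \<Rightarrow> real \<Rightarrow> real" where
  "y_of a X Y = sqrt (- X * Y) / a"

definition px_of :: "real \<Rightarrow> real \<Rightarrow> real \<Rightarrow> real \<Rightarrow> real \<Rightarrow> real" where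
  "px_of a P1 P2 X Y = 2 * a * (X * P1 - Y * P2) / (X - Y)"

definition py_of :: "real \<Rightarrow> real \<Rightarrow> real \<Rightarrow> real \<Rightarrow> real \<Rightarrow> real" where
  "py_of a P1 P2 X Y = 2 * a * sqrt (- X * Y) * (P1 - P2) / (X - Y)"

end

theory Submission
  imports Defs
begin

(* X and Y are the roots of t^2 - (2 a x + (\<omega>\<^sub>1 - 4 \<omega>\<^sub>2) / 2) t - a^2 y^2, so (X, Y) \<mapsto> (x, y) is a
   point transformation, and (px, py) is defined so that its pullback along the Jacobian is (P1, P2);
   this is the canonicity px dx + py dy = P1 dX + P2 dY. Since H and K involve y and py only through
   y^2, py^2 and y py, which are rational in X, Y, P1, P2, their Staeckel form is a rational identity.
   Read backwards, it says that (E, K/4) solves the linear system \<Phi>(X,P1) = E X + K/4,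
   \<Phi>(Y,P2) = E Y + K/4, whose two rows are the separated relations. *)

lemma Staeckel_separated_relations:
  fixes X Y F G H K :: "'a :: field_char_0"
  assumes "X \<noteq> Y"
    and "H = (F - G) / (X - Y)"
    and "K = (4 * X * G - 4 * Y * F) / (X - Y)"
  shows "F - H * X - K / 4 = 0" and "G - H * Y - K / 4 = 0"
proof -
  have "H * (X - Y) = F - G" and "K * (X - Y) = 4 * X * G - 4 * Y * F"
    using assms by simp_all
  then have "(X - Y) * (F - H * X - K / 4) = 0" and "(X - Y) * (G - H * Y - K / 4) = 0"
    by algebra+
  with assms(1) show "F - H * X - K / 4 = 0" and "G - H * Y - K / 4 = 0"
    by simp_all
qed

lemma y_of_py_of_products:
  fixes a P1 P2 X Y :: real
  assumes "a \<noteq> 0" and "X * Y \<le> 0"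
  shows "(y_of a X Y)\<^sup>2 = - X * Y / a\<^sup>2"
    and "(py_of a P1 P2 X Y)\<^sup>2 = 4 * a\<^sup>2 * (- X * Y) * (P1 - P2)\<^sup>2 / (X - Y)\<^sup>2"
    and "y_of a X Y * py_of a P1 P2 X Y = - 2 * X * Y * (P1 - P2) / (X - Y)"
proof -
  have s2: "(sqrt (- X * Y))\<^sup>2 = - X * Y"
    using assms(2) by simp
  show "(y_of a X Y)\<^sup>2 = - X * Y / a\<^sup>2"
    and "(py_of a P1 P2 X Y)\<^sup>2 = 4 * a\<^sup>2 * (- X * Y) * (P1 - P2)\<^sup>2 / (X - Y)\<^sup>2"
    unfolding y_of_def py_of_def power_divide power_mult_distrib s2 by simp_all
  have "y_of a X Y * py_of a P1 P2 X Y = 2 * (sqrt (- X * Y))\<^sup>2 * (P1 - P2) / (X - Y)"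
    unfolding y_of_def py_of_def using assms(1) by (simp add: power2_eq_square)
  also have "\<dots> = - 2 * X * Y * (P1 - P2) / (X - Y)"
    unfolding s2 by simp
  finally show "y_of a X Y * py_of a P1 P2 X Y = - 2 * X * Y * (P1 - P2) / (X - Y)" .
qed

lemma x_of_y_of_has_derivative:
  fixes a \<omega>\<^sub>1 \<omega>\<^sub>2 X Y :: real
  assumes "a \<noteq> 0" and "X * Y < 0"
  shows "((\<lambda>(U, V). (x_of a \<omega>\<^sub>1 \<omega>\<^sub>2 U V, y_of a U V)) has_derivative
          (\<lambda>(dX, dY). ((dX + dY) / (2 * a), - (Y * dX + X * dY) / (2 * a * sqrt (- X * Y)))))
         (at (X, Y))"
proof -
  have "sqrt (- X * Y) \<noteq> 0" and "X \<noteq> 0" and "Y \<noteq> 0"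
    using assms(2) by auto
  then have "((\<lambda>z. (x_of a \<omega>\<^sub>1 \<omega>\<^sub>2 (fst z) (snd z), y_of a (fst z) (snd z))) has_derivative
          (\<lambda>z. ((fst z + snd z) / (2 * a), - (Y * fst z + X * snd z) / (2 * a * sqrt (- X * Y)))))
         (at (X, Y))"
    using assms unfolding x_of_def y_of_def
    by (auto intro!: derivative_eq_intros simp: fun_eq_iff field_simps)
  then show ?thesis
    by (simp add: case_prod_beta')
qed

lemma change_of_variables_canonical:
  fixes a \<omega>\<^sub>1 \<omega>\<^sub>2 P1 P2 X Y :: real
  assumes "a \<noteq> 0" and "X * Y < 0" and "X \<noteq> Y"
  shows "\<exists>D. ((\<lambda>(U, V). (x_of a \<omega>\<^sub>1 \<omega>\<^sub>2 U V, y_of a U V)) has_derivative D) (at (X, Y))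
           \<and> (\<forall>dX dY. px_of a P1 P2 X Y * fst (D (dX, dY)) + py_of a P1 P2 X Y * snd (D (dX, dY))
                       = P1 * dX + P2 * dY)"
proof (intro exI conjI allI)
  define s where "s = sqrt (- X * Y)"
  show "((\<lambda>(U, V). (x_of a \<omega>\<^sub>1 \<omega>\<^sub>2 U V, y_of a U V)) has_derivative
      (\<lambda>(dX, dY). ((dX + dY) / (2 * a), - (Y * dX + X * dY) / (2 * a * s)))) (at (X, Y))"
    unfolding s_def using assms(1,2) by (rule x_of_y_of_has_derivative)
  fix dX dY :: real
  have "s \<noteq> 0" and "X - Y \<noteq> 0"
    using assms(2,3) by (auto simp: s_def)
  have "px_of a P1 P2 X Y * ((dX + dY) / (2 * a)) + py_of a P1 P2 X Y * (- (Y * dX + X * dY) / (2 * a * s))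
        = ((X * P1 - Y * P2) * (dX + dY) - (P1 - P2) * (Y * dX + X * dY)) / (X - Y)"
    unfolding px_of_def py_of_def s_def[symmetric] using assms(1) \<open>s \<noteq> 0\<close>
    by (simp add: divide_simps) (simp add: algebra_simps)
  also have "\<dots> = (X - Y) * (P1 * dX + P2 * dY) / (X - Y)"
    by (simp add: algebra_simps)
  also have "\<dots> = P1 * dX + P2 * dY"
    using \<open>X - Y \<noteq> 0\<close> by simp
  finally show "px_of a P1 P2 X Y * fst ((\<lambda>(dX, dY). ((dX + dY) / (2 * a), - (Y * dX + X * dY) / (2 * a * s))) (dX, dY))
      + py_of a P1 P2 X Y * snd ((\<lambda>(dX, dY). ((dX + dY) / (2 * a), - (Y * dX + X * dY) / (2 * a * s))) (dX, dY))
      = P1 * dX + P2 * dY"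
    by simp
qed

lemma H_KdV5_Staeckel_form:
  fixes a \<omega>\<^sub>1 \<omega>\<^sub>2 \<mu> P1 P2 X Y py y :: real
  assumes "a \<noteq> 0" "X \<noteq> 0" "Y \<noteq> 0" "X \<noteq> Y"
    and y2: "y\<^sup>2 = - X * Y / a\<^sup>2"
    and py2: "py\<^sup>2 = 4 * a\<^sup>2 * (- X * Y) * (P1 - P2)\<^sup>2 / (X - Y)\<^sup>2"
  shows "H_KdV5 a \<omega>\<^sub>1 \<omega>\<^sub>2 \<mu> (px_of a P1 P2 X Y) py (x_of a \<omega>\<^sub>1 \<omega>\<^sub>2 X Y) y
         = (Phi a \<omega>\<^sub>1 \<omega>\<^sub>2 \<mu> X P1 - Phi a \<omega>\<^sub>1 \<omega>\<^sub>2 \<mu> Y P2) / (X - Y)"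
  using assms(1-4)
  unfolding H_KdV5_def Phi_def px_of_def x_of_def y2 py2
  by (simp add: divide_simps) (simp add: algebra_simps eval_nat_numeral)

lemma K_KdV5_Staeckel_form:
  fixes a \<omega>\<^sub>1 \<omega>\<^sub>2 \<mu> P1 P2 X Y py y :: real
  assumes "a \<noteq> 0" "X \<noteq> 0" "Y \<noteq> 0" "X \<noteq> Y"
    and y2: "y\<^sup>2 = - X * Y / a\<^sup>2"
    and py2: "py\<^sup>2 = 4 * a\<^sup>2 * (- X * Y) * (P1 - P2)\<^sup>2 / (X - Y)\<^sup>2"
    and ypy: "y * py = - 2 * X * Y * (P1 - P2) / (X - Y)"
  shows "K_KdV5 a \<omega>\<^sub>1 \<omega>\<^sub>2 \<mu> (px_of a P1 P2 X Y) py (x_of a \<omega>\<^sub>1 \<omega>\<^sub>2 X Y) y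
         = (4 * X * Phi a \<omega>\<^sub>1 \<omega>\<^sub>2 \<mu> Y P2 - 4 * Y * Phi a \<omega>\<^sub>1 \<omega>\<^sub>2 \<mu> X P1) / (X - Y)"
proof -
  define px x where "px = px_of a P1 P2 X Y" and "x = x_of a \<omega>\<^sub>1 \<omega>\<^sub>2 X Y"
  have "K_KdV5 a \<omega>\<^sub>1 \<omega>\<^sub>2 \<mu> px py x y
      = 4 * a * px * (y * py) + (4 * \<omega>\<^sub>2 - \<omega>\<^sub>1 - 4 * a * x) * (py\<^sup>2 + \<mu> / y\<^sup>2) + a\<^sup>2 * (y\<^sup>2)\<^sup>2
        + 4 * a\<^sup>2 * x\<^sup>2 * y\<^sup>2 + 4 * a * \<omega>\<^sub>2 * x * y\<^sup>2 + \<omega>\<^sub>2 * (4 * \<omega>\<^sub>2 - \<omega>\<^sub>1) * y\<^sup>2"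
    unfolding K_KdV5_def by (simp add: algebra_simps flip: power_mult)
  also have "\<dots> = (4 * X * Phi a \<omega>\<^sub>1 \<omega>\<^sub>2 \<mu> Y P2 - 4 * Y * Phi a \<omega>\<^sub>1 \<omega>\<^sub>2 \<mu> X P1) / (X - Y)"
    using assms(1-4)
    unfolding y2 py2 ypy Phi_def px_def x_def px_of_def x_of_def
    by (simp add: divide_simps) (simp add: algebra_simps eval_nat_numeral)
  finally show ?thesis unfolding px_def x_def .
qed

theorem mainTheorem3:
  fixes a \<omega>\<^sub>1 \<omega>\<^sub>2 \<mu> P1 P2 X Y :: real
  assumes "a \<noteq> 0" and "X * Y < 0" and "X \<noteq> Y"
  defines "px \<equiv> px_of a P1 P2 X Y" and "py \<equiv> py_of a P1 P2 X Y"
      and "x \<equiv> x_of a \<omega>\<^sub>1 \<omega>\<^sub>2 X Y" and "y \<equiv> y_of a X Y"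
  shows "(\<exists>D. ((\<lambda>(U, V). (x_of a \<omega>\<^sub>1 \<omega>\<^sub>2 U V, y_of a U V)) has_derivative D) (at (X, Y))
              \<and> (\<forall>dX dY. px * fst (D (dX, dY)) + py * snd (D (dX, dY)) = P1 * dX + P2 * dY))
    \<and> H_KdV5 a \<omega>\<^sub>1 \<omega>\<^sub>2 \<mu> px py x y
        = (Phi a \<omega>\<^sub>1 \<omega>\<^sub>2 \<mu> X P1 - Phi a \<omega>\<^sub>1 \<omega>\<^sub>2 \<mu> Y P2) / (X - Y)
    \<and> K_KdV5 a \<omega>\<^sub>1 \<omega>\<^sub>2 \<mu> px py x y
        = (4 * X * Phi a \<omega>\<^sub>1 \<omega>\<^sub>2 \<mu> Y P2 - 4 * Y * Phi a \<omega>\<^sub>1 \<omega>\<^sub>2 \<mu> X P1) / (X - Y)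
    \<and> (\<forall>E K. H_KdV5 a \<omega>\<^sub>1 \<omega>\<^sub>2 \<mu> px py x y = E \<and> K_KdV5 a \<omega>\<^sub>1 \<omega>\<^sub>2 \<mu> px py x y = K \<longrightarrow>
         Phi a \<omega>\<^sub>1 \<omega>\<^sub>2 \<mu> X P1 - E * X - K / 4 = 0 \<and> Phi a \<omega>\<^sub>1 \<omega>\<^sub>2 \<mu> Y P2 - E * Y - K / 4 = 0)"
proof -
  have "X \<noteq> 0" and "Y \<noteq> 0"
    using assms(2) by auto
  note products = y_of_py_of_products[OF assms(1) less_imp_le[OF assms(2)]]
  have H: "H_KdV5 a \<omega>\<^sub>1 \<omega>\<^sub>2 \<mu> px py x y
      = (Phi a \<omega>\<^sub>1 \<omega>\<^sub>2 \<mu> X P1 - Phi a \<omega>\<^sub>1 \<omega>\<^sub>2 \<mu> Y P2) / (X - Y)"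
    unfolding px_def py_def x_def y_def
    using H_KdV5_Staeckel_form[OF assms(1) \<open>X \<noteq> 0\<close> \<open>Y \<noteq> 0\<close> assms(3) products(1,2)] .
  have K: "K_KdV5 a \<omega>\<^sub>1 \<omega>\<^sub>2 \<mu> px py x y
      = (4 * X * Phi a \<omega>\<^sub>1 \<omega>\<^sub>2 \<mu> Y P2 - 4 * Y * Phi a \<omega>\<^sub>1 \<omega>\<^sub>2 \<mu> X P1) / (X - Y)"
    unfolding px_def py_def x_def y_def
    using K_KdV5_Staeckel_form[OF assms(1) \<open>X \<noteq> 0\<close> \<open>Y \<noteq> 0\<close> assms(3) products] .
  have canonical: "\<exists>D. ((\<lambda>(U, V). (x_of a \<omega>\<^sub>1 \<omega>\<^sub>2 U V, y_of a U V)) has_derivative D) (at (X, Y))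
      \<and> (\<forall>dX dY. px * fst (D (dX, dY)) + py * snd (D (dX, dY)) = P1 * dX + P2 * dY)"
    unfolding px_def py_def using assms(1-3) by (rule change_of_variables_canonical)
  show ?thesis
    using canonical H K Staeckel_separated_relations[OF assms(3)] by blast
qed

end
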